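(* Let $\eta$ be a stationary hyperuniform point process on $\mathbb{R}$ (unit intensity) with truncated pair correlation measure $\beta$ satisfying $|\beta|(\mathbb{R})<\infty$. Let $F(x)=\beta([x,\infty))$ and $G(y)=-\int_0^yF(x)\,\mathrm{d}x$. Then $G(y)=\frac12\operatorname{Var}(\eta(\Lambda_y))$ for all $y>0$. Consider the statements: (i) $G$ is regularly varying with some parameter $a\in[0,1]$, i.e. $\lim_{n\to\infty}G(xn)/G(n)=x^a$ for all $x>0$; (ii) for all $z\in\mathbb{R}$ the limit $\mathrm{cov}(z)$ exists and equals $\mathrm{cov}(z)=\frac{|z-1|^a}{2}+\frac{|z+1|^a}{2}-|z|^a$ if $a\in(0,1]$, while for $a=0$ one has $\mathrm{cov}(0)=1$, $\mathrm{cov}(1)=\mathrm{cov}(-1)=-\frac12$ and $\mathrm{cov}(z)=0$ for $z\notin\{-1,0,1\}$; (iii) the limits $\mathrm{cov}(1)$ and $\mathrm{cov}(2)$ exist and are finite. Then (i) implies (ii) (with the same $a$). If in addition $F(x)\le 0$ for all sufficiently large $x$ (or $F(x)\ge0$ for all sufficiently large $x$), then (i), (ii) and (iii) are all equivalent (with (iii) implying (i) for some $a\in[0,1]$). In each of these cases $\mathrm{cov}(1)=2^{a-1}-1$.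
   Context: A point process on $\mathbb{R}$ is a random simple locally finite counting measure; stationary means shift-invariant in law; unit intensity means $\mathbb{E}[\eta(W)]=\lambda_1(W)$. With $\alpha^2$ the second factorial moment measure $\alpha^2(W)=\mathbb{E}[\sum_{n_1\ne n_2}\mathbf 1_{(X_{n_1},X_{n_2})\in W}]$ for $\eta=\sum_n\delta_{X_n}$, the reduced measure $\alpha^2_!$ is defined by $\int f\,\mathrm{d}\alpha^2=\iint f(x+y,y)\,\alpha^2_!(\mathrm{d}x)\,\mathrm{d}y$ for measurable $f\ge0$, and the truncated pair correlation measure is the signed measure $\beta=\alpha^2_!-\lambda_1$; it is symmetric under $x\mapsto -x$. $\Lambda_n(z)=[z,z+n]$, $\Lambda_n=[0,n]$. Hyperuniform: $\operatorname{Var}(\eta(\Lambda_n))/n\to0$; under $|\beta|(\mathbb{R})<\infty$ this is equivalent to $\beta(\mathbb{R})=-1$. $\mathrm{cov}(z)=\lim_{n\to\infty}\operatorname{Cov}(\eta(\Lambda_n),\eta(\Lambda_n(nz)))/\operatorname{Var}(\eta(\Lambda_n))$. *)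

theory Defs
  imports "HOL-Probability.Probability"
begin

text \<open>A simple point process on the real line is modelled as a random locally finite
  set of points X :: 'w => real set (its support); the counting measure is
  eta(W) = #(X w \<inter> W).\<close>

definition cnt :: "('w \<Rightarrow> real set) \<Rightarrow> 'w \<Rightarrow> real set \<Rightarrow> real" where
  "cnt X w W = real (card (X w \<inter> W))"

definition ecnt :: "('w \<Rightarrow> real set) \<Rightarrow> 'w \<Rightarrow> real set \<Rightarrow> ennreal" where
  "ecnt X w W = emeasure (count_space UNIV) (X w \<inter> W)"

definition point_process :: "'w measure \<Rightarrow> ('w \<Rightarrow> real set) \<Rightarrow> bool" where
  "point_process M X \<longleftrightarrow> prob_space M \<and>
     (\<forall>w\<in>space M. \<forall>B. bounded B \<longrightarrow> finite (X w \<inter> B)) \<and>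
     (\<forall>B\<in>sets borel. bounded B \<longrightarrow>
        (\<lambda>w. card (X w \<inter> B)) \<in> measurable M (count_space UNIV))"

definition stationary_pp :: "'w measure \<Rightarrow> ('w \<Rightarrow> real set) \<Rightarrow> bool" where
  "stationary_pp M X \<longleftrightarrow>
     (\<forall>t::real. \<forall>n::nat. \<forall>Ws :: nat \<Rightarrow> real set.
        (\<forall>i<n. Ws i \<in> sets borel \<and> bounded (Ws i)) \<longrightarrow>
        distr M (PiM {..<n} (\<lambda>_. count_space (UNIV :: nat set)))
             (\<lambda>w. \<lambda>i\<in>{..<n}. card (X w \<inter> ((+) t) ` Ws i))
      = distr M (PiM {..<n} (\<lambda>_. count_space (UNIV :: nat set)))
             (\<lambda>w. \<lambda>i\<in>{..<n}. card (X w \<inter> Ws i)))"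

definition unit_intensity :: "'w measure \<Rightarrow> ('w \<Rightarrow> real set) \<Rightarrow> bool" where
  "unit_intensity M X \<longleftrightarrow>
     (\<forall>W\<in>sets borel. (\<integral>\<^sup>+ w. ecnt X w W \<partial>M) = emeasure lborel W)"

definition pairs2 :: "('w \<Rightarrow> real set) \<Rightarrow> 'w \<Rightarrow> (real \<times> real) set" where
  "pairs2 X w = {(x, y). x \<in> X w \<and> y \<in> X w \<and> x \<noteq> y}"

text \<open>A is the reduced second factorial moment measure: for measurable f \<ge> 0,
  integral f d(alpha^2) = E[sum over n1 \<noteq> n2 of f(X_n1, X_n2)] equals the iterated
  integral of f(x+y,y) against A(dx) dy.\<close>
definition reduced_second_moment ::
    "'w measure \<Rightarrow> ('w \<Rightarrow> real set) \<Rightarrow> real measure \<Rightarrow> bool" where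
  "reduced_second_moment M X A \<longleftrightarrow> sets A = sets borel \<and>
     (\<forall>f \<in> borel_measurable (borel \<Otimes>\<^sub>M borel).
        (\<integral>\<^sup>+ w. (\<integral>\<^sup>+ p. f p \<partial>count_space (pairs2 X w)) \<partial>M)
        = (\<integral>\<^sup>+ y. (\<integral>\<^sup>+ x. f (x + y, y) \<partial>A) \<partial>lborel))"

text \<open>The truncated pair correlation
  measure beta = A - lebesgue with finite total variation is represented by a pair of
  finite Borel measures Bp, Bn with A + Bn = lebesgue + Bp, so beta = Bp - Bn.
  (Such a pair exists iff |beta|(R) < \<infinity>, e.g. via the Jordan decomposition.)\<close>
definition finite_tpc_decomp :: "real measure \<Rightarrow> real measure \<Rightarrow> real measure \<Rightarrow> bool" where
  "finite_tpc_decomp A Bp Bn \<longleftrightarrow>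
     finite_measure Bp \<and> finite_measure Bn \<and>
     sets Bp = sets borel \<and> sets Bn = sets borel \<and>
     (\<forall>B\<in>sets borel. emeasure A B + emeasure Bn B = emeasure lborel B + emeasure Bp B)"

definition beta_of :: "real measure \<Rightarrow> real measure \<Rightarrow> real set \<Rightarrow> real" where
  "beta_of Bp Bn B = measure Bp B - measure Bn B"

definition Fb :: "real measure \<Rightarrow> real measure \<Rightarrow> real \<Rightarrow> real" where
  "Fb Bp Bn x = beta_of Bp Bn {x..}"

definition Gb :: "real measure \<Rightarrow> real measure \<Rightarrow> real \<Rightarrow> real" where
  "Gb Bp Bn y = - integral {0..y} (Fb Bp Bn)"

definition var_cnt :: "'w measure \<Rightarrow> ('w \<Rightarrow> real set) \<Rightarrow> real set \<Rightarrow> real" where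
  "var_cnt M X W = prob_space.variance M (\<lambda>w. cnt X w W)"

definition cov_cnt :: "'w measure \<Rightarrow> ('w \<Rightarrow> real set) \<Rightarrow> real set \<Rightarrow> real set \<Rightarrow> real" where
  "cov_cnt M X V W = prob_space.expectation M
     (\<lambda>w. (cnt X w V - prob_space.expectation M (\<lambda>v. cnt X v V)) *
          (cnt X w W - prob_space.expectation M (\<lambda>v. cnt X v W)))"

definition Lam :: "real \<Rightarrow> real \<Rightarrow> real set" where
  "Lam n z = {z..z+n}"

definition hyperuniform :: "'w measure \<Rightarrow> ('w \<Rightarrow> real set) \<Rightarrow> bool" where
  "hyperuniform M X \<longleftrightarrow> ((\<lambda>n. var_cnt M X (Lam n 0) / n) \<longlongrightarrow> 0) at_top"

text \<open>The ratio whose limit (n \<rightarrow> \<infinity>) is cov(z).\<close>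
definition cov_ratio :: "'w measure \<Rightarrow> ('w \<Rightarrow> real set) \<Rightarrow> real \<Rightarrow> real \<Rightarrow> real" where
  "cov_ratio M X z n = cov_cnt M X (Lam n 0) (Lam n (n * z)) / var_cnt M X (Lam n 0)"

definition regularly_varying :: "(real \<Rightarrow> real) \<Rightarrow> real \<Rightarrow> bool" where
  "regularly_varying G a \<longleftrightarrow>
     (\<forall>x>0. ((\<lambda>n. G (x * n) / G n) \<longlongrightarrow> x powr a) at_top)"

definition cov_target :: "real \<Rightarrow> real \<Rightarrow> real" where
  "cov_target a z =
     (if 0 < a then \<bar>z - 1\<bar> powr a / 2 + \<bar>z + 1\<bar> powr a / 2 - \<bar>z\<bar> powr a
      else if z = 0 then 1 else if z = 1 \<or> z = -1 then -1/2 else 0)"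

end

theory Submission
  imports Defs "HOL-Analysis.Kronecker_Approximation_Theorem"
begin

text \<open>Writing \<open>\<beta> = Bp - Bn\<close>, the reduced second moment measure gives
  \<open>Cov(\<eta>(B), \<eta>(C)) = |B \<inter> C| + \<integral> |(B - x) \<inter> C| d\<beta>(x)\<close>.  For intervals, the symmetry of
  \<open>\<beta>\<close> and \<open>\<beta>(\<real>) = -1\<close> (hyperuniformity) turn this into \<open>Var \<eta>(\<Lambda>\<^sub>y) = 2 G(y)\<close> and into
  \<open>(G(|z + 1| n) + G(|z - 1| n) - 2 G(|z| n)) / (2 G(n))\<close> for the covariance ratio, whose limit
  is immediate when \<open>G\<close> is regularly varying.  Conversely, for eventually monotone \<open>G\<close> the
  limits at \<open>z = 1, 2\<close> are limits of \<open>G(2n) / G(n)\<close> and \<open>G(3n) / G(n)\<close>; for \<open>h = ln \<circ> G \<circ> exp\<close>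
  this says that \<open>h(t + d) - h(t)\<close> converges for \<open>d\<close> in the group generated by \<open>ln 2\<close> and \<open>ln 3\<close>,
  which is dense as \<open>ln 3 / ln 2\<close> is irrational, and monotonicity of \<open>h\<close> forces these limits to
  be linear in every \<open>d\<close>, i.e. regular variation.  The index is at most 1 since \<open>G(y) / y \<rightarrow> 0\<close>,
  and \<open>G\<close> stays away from 0 because \<open>\<eta>(\<Lambda>\<^bsub>k + 1/2\<^esub>)\<close> is an integer with non-integer mean.\<close>

section \<open>Regular variation from the ratios at 2 and 3\<close>

lemma ln3_div_ln2_irrational: "ln 3 / ln 2 \<notin> (\<rat> :: real set)"
proof
  assume "ln 3 / ln 2 \<in> (\<rat> :: real set)"
  then obtain i j :: int where j: "0 < j" and ij: "ln 3 / ln 2 = (of_int i / of_int j :: real)"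
    by (elim Rats_cases')
  have eq: "of_int j * ln (3::real) = of_int i * ln 2"
    using ij j by (simp add: field_simps)
  moreover have "0 < of_int j * ln (3::real)" using j by simp
  ultimately have i: "0 < i" by (simp add: zero_less_mult_iff)
  have "ln ((3::real) ^ nat j) = ln (2 ^ nat i)"
    using eq i j by (simp add: ln_realpow)
  then have "real (3 ^ nat j) = real (2 ^ nat i)" by simp
  then have "(3::nat) ^ nat j = 2 ^ nat i" by (simp only: of_nat_eq_iff)
  then have "even ((3::nat) ^ nat j)" using i by simp
  then show False by simp
qed

lemma small_positive_int_combination:
  fixes a b \<epsilon> :: real
  assumes a: "0 < a" and irr: "b / a \<notin> \<rat>" and \<epsilon>: "0 < \<epsilon>"
  obtains i j :: int where "0 < of_int i * a + of_int j * b" "of_int i * a + of_int j * b < \<epsilon>"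
proof -
  define N where "N = nat \<lceil>a / \<epsilon>\<rceil> + 1"
  have N: "0 < N" "a / \<epsilon> < real N" unfolding N_def by linarith+
  obtain h k where k: "0 < k" and hk: "\<bar>of_int k * (b / a) - of_int h\<bar> < 1 / real N"
    using Dirichlet_approx[OF N(1)] by blast
  define d where "d = of_int (- h) * a + of_int k * b"
  have d: "d = a * (of_int k * (b / a) - of_int h)" unfolding d_def using a by (simp add: field_simps)
  have "\<bar>d\<bar> < a / real N" unfolding d abs_mult using hk a N by (simp add: field_simps)
  also have "\<dots> < \<epsilon>" using N \<epsilon> by (simp add: field_simps)
  finally have "\<bar>d\<bar> < \<epsilon>" .
  moreover have "d \<noteq> 0"
  proof
    assume "d = 0"
    then have "b / a = of_int h / of_int k" using a k unfolding d by (simp add: field_simps)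
    with irr show False by simp
  qed
  ultimately consider "0 < d" "d < \<epsilon>" | "0 < - d" "- d < \<epsilon>" by linarith
  then show thesis
    by cases (use that[of "- h" k] that[of h "- k"] in \<open>simp_all add: d_def\<close>)
qed

lemma le_mult_if_rational_bounds_above:
  fixes \<theta> p c :: real
  assumes p: "0 \<le> p" and above: "\<And>r. r \<in> \<rat> \<Longrightarrow> \<theta> < r \<Longrightarrow> c \<le> r * p"
  shows "c \<le> \<theta> * p"
proof (rule ccontr)
  assume "\<not> c \<le> \<theta> * p"
  define \<delta> where "\<delta> = (c - \<theta> * p) / (p + 1)"
  have \<delta>: "0 < \<delta>" using \<open>\<not> c \<le> \<theta> * p\<close> p by (simp add: \<delta>_def)
  have "\<delta> * p = (c - \<theta> * p) * (p / (p + 1))" by (simp add: \<delta>_def)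
  also have "\<dots> < (c - \<theta> * p) * 1"
    using \<open>\<not> c \<le> \<theta> * p\<close> p by (intro mult_strict_left_mono) auto
  finally have \<delta>p: "\<delta> * p < c - \<theta> * p" by simp
  obtain r where r: "r \<in> \<rat>" "\<theta> < r" "r < \<theta> + \<delta>"
    using Rats_dense_in_real[of \<theta> "\<theta> + \<delta>"] \<delta> by auto
  have "r * p \<le> (\<theta> + \<delta>) * p" using r p by (intro mult_right_mono) auto
  then show False using above[OF r(1,2)] \<delta>p by (simp add: algebra_simps)
qed

lemma proportional_if_int_combinations_nonneg:
  fixes a b p q :: real
  assumes a: "0 < a" and b: "0 < b"
    and H: "\<And>i j :: int. 0 < of_int i * a + of_int j * b \<Longrightarrow> 0 \<le> of_int i * p + of_int j * q"
  shows "q * a = p * b"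
proof -
  have p: "0 \<le> p" using H[of 1 0] a by simp
  have "q \<le> b / a * p"
  proof (rule le_mult_if_rational_bounds_above[OF p])
    fix r :: real assume "r \<in> \<rat>" "b / a < r"
    then obtain i j :: int where j: "0 < j" and r: "r = of_int i / of_int j" by (elim Rats_cases')
    have "0 < of_int i * a + of_int (- j) * b"
      using \<open>b / a < r\<close> a j unfolding r by (simp add: field_simps)
    from H[OF this] show "q \<le> r * p" using j unfolding r by (simp add: field_simps)
  qed
  moreover have "- q \<le> - (b / a) * p"
  proof (rule le_mult_if_rational_bounds_above[OF p])
    fix r :: real assume "r \<in> \<rat>" "- (b / a) < r"
    then obtain i j :: int where j: "0 < j" and r: "r = of_int i / of_int j" by (elim Rats_cases')
    have "0 < of_int i * a + of_int j * b"
      using \<open>- (b / a) < r\<close> a j unfolding r by (simp add: field_simps)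
    from H[OF this] show "- q \<le> r * p" using j unfolding r by (simp add: field_simps)
  qed
  ultimately show ?thesis using a by (simp add: field_simps)
qed

definition increment_limit :: "(real \<Rightarrow> real) \<Rightarrow> real \<Rightarrow> real \<Rightarrow> bool" where
  "increment_limit h d c \<longleftrightarrow> ((\<lambda>t. h (t + d) - h t) \<longlongrightarrow> c) at_top"

lemma increment_limit_shift:
  assumes "increment_limit h d c"
  shows "((\<lambda>t. h (t + e + d) - h (t + e)) \<longlongrightarrow> c) at_top"
proof -
  have "filterlim (\<lambda>t. t + e) at_top at_top"
    by (rule filterlim_tendsto_add_at_top[OF tendsto_const filterlim_ident, of e, simplified add.commute])
  then show ?thesis using filterlim_compose assms unfolding increment_limit_def by blast
qed

lemma increment_limit_add:
  assumes "increment_limit h d c" "increment_limit h d' c'"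
  shows "increment_limit h (d + d') (c + c')"
proof -
  have "((\<lambda>t. (h (t + d + d') - h (t + d)) + (h (t + d) - h t)) \<longlongrightarrow> c' + c) at_top"
    using assms increment_limit_shift unfolding increment_limit_def by (intro tendsto_add) auto
  then show ?thesis unfolding increment_limit_def by (simp add: ac_simps)
qed

lemma increment_limit_uminus:
  assumes "increment_limit h d c"
  shows "increment_limit h (- d) (- c)"
proof -
  have "((\<lambda>t. - (h (t + - d + d) - h (t + - d))) \<longlongrightarrow> - c) at_top"
    by (intro tendsto_minus increment_limit_shift assms)
  then show ?thesis unfolding increment_limit_def by simp
qed

lemma increment_limit_of_int_mult:
  assumes "increment_limit h d c"
  shows "increment_limit h (of_int i * d) (of_int i * c)"
proof -
  have nat: "increment_limit h (of_nat n * d) (of_nat n * c)" for n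
  proof (induction n)
    case 0
    then show ?case by (simp add: increment_limit_def)
  next
    case (Suc n)
    from increment_limit_add[OF this assms] show ?case by (simp add: algebra_simps)
  qed
  show ?thesis
  proof (cases "0 \<le> i")
    case True
    then show ?thesis using nat[of "nat i"] by simp
  next
    case False
    then show ?thesis using increment_limit_uminus[OF nat[of "nat (- i)"]] by simp
  qed
qed

lemma increment_limit_nonneg:
  assumes "mono_on {t0..} h" "increment_limit h d c" "0 \<le> d"
  shows "0 \<le> c"
proof (rule tendsto_lowerbound)
  show "((\<lambda>t. h (t + d) - h t) \<longlongrightarrow> c) at_top" using assms(2) by (simp add: increment_limit_def)
  show "\<forall>\<^sub>F t in at_top. 0 \<le> h (t + d) - h t"
    using eventually_ge_at_top[of t0] by eventually_elim (use assms(3) in \<open>auto intro!: mono_onD[OF assms(1)]\<close>)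
qed simp

lemma increment_limit_squeeze:
  assumes mono: "mono_on {t0..} h" and \<kappa>: "0 \<le> \<kappa>"
    and approx: "\<And>\<epsilon>. 0 < \<epsilon> \<Longrightarrow> \<exists>d1 d2. d1 \<le> s \<and> s \<le> d2 \<and> \<kappa> * (d2 - d1) < \<epsilon>
                      \<and> increment_limit h d1 (\<kappa> * d1) \<and> increment_limit h d2 (\<kappa> * d2)"
  shows "increment_limit h s (\<kappa> * s)"
  unfolding increment_limit_def
proof (rule tendstoI)
  fix \<epsilon> :: real assume "0 < \<epsilon>"
  then have half: "0 < \<epsilon> / 2" by simp
  obtain d1 d2 where d: "d1 \<le> s" "s \<le> d2" "\<kappa> * (d2 - d1) < \<epsilon> / 2"
    and lim1: "increment_limit h d1 (\<kappa> * d1)" and lim2: "increment_limit h d2 (\<kappa> * d2)"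
    using approx[OF half] by auto
  have \<kappa>s: "\<kappa> * d1 \<le> \<kappa> * s" "\<kappa> * s \<le> \<kappa> * d2" "\<kappa> * d2 - \<kappa> * d1 < \<epsilon> / 2"
    using d \<kappa> by (auto intro: mult_left_mono simp: right_diff_distrib)
  note tendstoD[OF lim1[unfolded increment_limit_def] half]
    and tendstoD[OF lim2[unfolded increment_limit_def] half]
  moreover have "\<forall>\<^sub>F t in at_top. h (t + d1) \<le> h (t + s) \<and> h (t + s) \<le> h (t + d2)"
    using eventually_ge_at_top[of "t0 - d1"]
    by eventually_elim (use d in \<open>auto intro!: mono_onD[OF mono]\<close>)
  ultimately show "\<forall>\<^sub>F t in at_top. dist (h (t + s) - h t) (\<kappa> * s) < \<epsilon>"
    by eventually_elim (use \<kappa>s in \<open>unfold dist_real_def abs_less_iff, elim conjE, intro conjI; linarith\<close>)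
qed

lemma increment_limit_linear:
  assumes mono: "mono_on {t0..} h" and a: "0 < a" and b: "0 < b" and irr: "b / a \<notin> \<rat>"
    and lim_a: "increment_limit h a p" and lim_b: "increment_limit h b q"
  shows "increment_limit h s (p / a * s)"
proof -
  define \<kappa> where "\<kappa> = p / a"
  have comb: "increment_limit h (of_int i * a + of_int j * b) (of_int i * p + of_int j * q)" for i j
    by (intro increment_limit_add increment_limit_of_int_mult lim_a lim_b)
  have "q * a = p * b"
    using proportional_if_int_combinations_nonneg[OF a b] increment_limit_nonneg[OF mono comb]
    by (simp add: less_imp_le)
  then have "q = \<kappa> * b" and "p = \<kappa> * a" using a by (simp_all add: \<kappa>_def field_simps)
  then have lin: "increment_limit h (of_int i * a + of_int j * b) (\<kappa> * (of_int i * a + of_int j * b))"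
    for i j using comb[of i j] by (simp add: algebra_simps)
  have \<kappa>: "0 \<le> \<kappa>" using increment_limit_nonneg[OF mono lim_a] a by (simp add: \<kappa>_def)
  show ?thesis
    unfolding \<kappa>_def[symmetric]
  proof (rule increment_limit_squeeze[OF mono \<kappa>])
    fix \<epsilon> :: real assume "0 < \<epsilon>"
    then obtain i j :: int where e: "0 < of_int i * a + of_int j * b" "of_int i * a + of_int j * b < \<epsilon> / (\<kappa> + 1)"
      using small_positive_int_combination[OF a irr, of "\<epsilon> / (\<kappa> + 1)"] \<kappa> by auto
    define e where "e = of_int i * a + of_int j * b"
    define m where "m = \<lfloor>s / e\<rfloor>"
    have "of_int m \<le> s / e" "s / e \<le> of_int (m + 1)" unfolding m_def by linarith+
    then have "of_int m * e \<le> s" "s \<le> of_int (m + 1) * e"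
      using e unfolding e_def[symmetric] by (simp_all add: field_simps)
    moreover have "\<kappa> * (of_int (m + 1) * e - of_int m * e) < \<epsilon>"
    proof -
      have "\<kappa> * e \<le> \<kappa> * (\<epsilon> / (\<kappa> + 1))" using e \<kappa> unfolding e_def by (intro mult_left_mono) auto
      also have "\<dots> < \<epsilon>" using \<open>0 < \<epsilon>\<close> \<kappa> by (simp add: field_simps)
      finally show ?thesis by (simp add: algebra_simps)
    qed
    moreover have "increment_limit h (of_int k * e) (\<kappa> * (of_int k * e))" for k
      using lin[of "k * i" "k * j"] by (simp add: e_def algebra_simps)
    ultimately show "\<exists>d1 d2. d1 \<le> s \<and> s \<le> d2 \<and> \<kappa> * (d2 - d1) < \<epsilon>
                      \<and> increment_limit h d1 (\<kappa> * d1) \<and> increment_limit h d2 (\<kappa> * d2)"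
      by blast
  qed
qed

lemma increment_limit_ln_exp_if_ratio_limit:
  fixes g :: "real \<Rightarrow> real"
  assumes pos: "\<forall>\<^sub>F x in at_top. 0 < g x" and c: "0 < c" and L: "0 < L"
    and lim: "((\<lambda>n. g (c * n) / g n) \<longlongrightarrow> L) at_top"
  shows "increment_limit (\<lambda>t. ln (g (exp t))) (ln c) (ln L)"
  unfolding increment_limit_def
proof (rule Lim_transform_eventually)
  have "filterlim (\<lambda>t. c * exp t) at_top at_top"
    by (rule filterlim_tendsto_pos_mult_at_top[OF tendsto_const c exp_at_top])
  with pos have "\<forall>\<^sub>F t in at_top. 0 < g (c * exp t)" by (rule eventually_compose_filterlim)
  moreover have "\<forall>\<^sub>F t in at_top. 0 < g (exp t)" using pos exp_at_top by (rule eventually_compose_filterlim)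
  ultimately show "\<forall>\<^sub>F t in at_top. ln (g (c * exp t) / g (exp t)) = ln (g (exp (t + ln c))) - ln (g (exp t))"
    by eventually_elim (use c in \<open>simp add: exp_add ln_div mult.commute\<close>)
  show "((\<lambda>t. ln (g (c * exp t) / g (exp t))) \<longlongrightarrow> ln L) at_top"
    using L by (intro tendsto_ln filterlim_compose[OF lim exp_at_top]) auto
qed

lemma regularly_varying_if_increment_limits:
  fixes g :: "real \<Rightarrow> real"
  assumes pos: "\<forall>\<^sub>F x in at_top. 0 < g x"
    and lim: "\<And>s. increment_limit (\<lambda>t. ln (g (exp t))) s (\<kappa> * s)"
  shows "regularly_varying g \<kappa>"
  unfolding regularly_varying_def
proof (intro allI impI)
  fix x :: real assume x: "0 < x"
  have "((\<lambda>n. exp (ln (g (exp (ln n + ln x))) - ln (g (exp (ln n))))) \<longlongrightarrow> exp (\<kappa> * ln x)) at_top"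
    using lim[of "ln x"] unfolding increment_limit_def by (intro tendsto_exp filterlim_compose[OF _ ln_at_top])
  moreover have "filterlim (\<lambda>n. x * n) at_top at_top"
    by (rule filterlim_tendsto_pos_mult_at_top[OF tendsto_const x filterlim_ident])
  with pos have "\<forall>\<^sub>F n in at_top. 0 < g (x * n)" by (rule eventually_compose_filterlim)
  then have "\<forall>\<^sub>F n in at_top. exp (ln (g (exp (ln n + ln x))) - ln (g (exp (ln n)))) = g (x * n) / g n"
    using pos eventually_gt_at_top[of 0]
    by eventually_elim (use x in \<open>simp add: exp_diff exp_add mult.commute\<close>)
  ultimately show "((\<lambda>n. g (x * n) / g n) \<longlongrightarrow> x powr \<kappa>) at_top"
    using x by (simp add: powr_def Lim_transform_eventually mult.commute)
qed

lemma regularly_varying_if_ratio_limits_2_3: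
  fixes g :: "real \<Rightarrow> real"
  assumes mono: "mono_on {x0..} g" and pos: "\<forall>\<^sub>F x in at_top. 0 < g x"
    and lim2: "((\<lambda>n. g (2 * n) / g n) \<longlongrightarrow> L2) at_top"
    and lim3: "((\<lambda>n. g (3 * n) / g n) \<longlongrightarrow> L3) at_top"
  shows "\<exists>\<kappa>\<ge>0. regularly_varying g \<kappa>"
proof -
  obtain x where x: "\<And>y. x \<le> y \<Longrightarrow> 0 < g y" using pos unfolding eventually_at_top_linorder by blast
  define x1 where "x1 = max (max x0 x) 1"
  have x1: "x0 \<le> x1" "0 < x1" "\<And>y. x1 \<le> y \<Longrightarrow> 0 < g y" using x by (auto simp: x1_def)
  have ratio_ge_1: "1 \<le> L" if "((\<lambda>n. g (c * n) / g n) \<longlongrightarrow> L) at_top" "1 \<le> c" for c L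
  proof (rule tendsto_lowerbound[OF that(1)])
    show "\<forall>\<^sub>F n in at_top. 1 \<le> g (c * n) / g n"
      using eventually_ge_at_top[of x1]
    proof eventually_elim
      case (elim n)
      then have "x0 \<le> n" "n \<le> c * n" using x1 that(2) by (simp_all add: mult_le_cancel_right1)
      then have "g n \<le> g (c * n)" using mono_onD[OF mono, of n "c * n"] by simp
      then show ?case using x1(3)[OF elim] by simp
    qed
  qed simp
  define h where "h t = ln (g (exp t))" for t
  have mono_h: "mono_on {ln x1..} h"
  proof (rule mono_onI)
    fix s t assume "s \<in> {ln x1..}" "t \<in> {ln x1..}" "s \<le> t"
    then have "x1 \<le> exp s" "exp s \<le> exp t" using x1 exp_le_cancel_iff[of "ln x1" s] by auto
    then have "0 < g (exp s)" "g (exp s) \<le> g (exp t)" using x1 mono_onD[OF mono, of "exp s" "exp t"] by auto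
    then show "h s \<le> h t" unfolding h_def by simp
  qed
  have lim_h: "increment_limit h (ln 2) (ln L2)" "increment_limit h (ln 3) (ln L3)"
    unfolding h_def using ratio_ge_1[OF lim2] ratio_ge_1[OF lim3]
    by (auto intro!: increment_limit_ln_exp_if_ratio_limit pos lim2 lim3)
  have "increment_limit h s (ln L2 / ln 2 * s)" for s
    by (rule increment_limit_linear[OF mono_h _ _ ln3_div_ln2_irrational lim_h]) auto
  then have "regularly_varying g (ln L2 / ln 2)"
    unfolding h_def by (intro regularly_varying_if_increment_limits pos)
  moreover have "0 \<le> ln L2 / ln 2" using ratio_ge_1[OF lim2] by simp
  ultimately show ?thesis by blast
qed

lemma regularly_varying_index_le_1:
  fixes g :: "real \<Rightarrow> real"
  assumes sublinear: "((\<lambda>y. g y / y) \<longlongrightarrow> 0) at_top"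
    and pos: "\<forall>\<^sub>F x in at_top. 0 < g x" and rv: "regularly_varying g \<kappa>"
  shows "\<kappa> \<le> 1"
proof (rule ccontr)
  assume "\<not> \<kappa> \<le> 1"
  then have "2 < 2 powr \<kappa>" using powr_less_mono[of 1 \<kappa> 2] by simp
  moreover have "((\<lambda>n. g (2 * n) / g n) \<longlongrightarrow> 2 powr \<kappa>) at_top"
    using rv by (simp add: regularly_varying_def)
  ultimately have "\<forall>\<^sub>F n in at_top. 2 < g (2 * n) / g n" by (simp add: order_tendstoD(1))
  with pos eventually_ge_at_top[of 1]
  have "\<forall>\<^sub>F n in at_top. 1 \<le> n \<and> 0 < g n \<and> 2 < g (2 * n) / g n" by eventually_elim auto
  then obtain N where N: "\<And>n. N \<le> n \<Longrightarrow> 1 \<le> n \<and> 0 < g n \<and> 2 < g (2 * n) / g n"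
    unfolding eventually_at_top_linorder by blast
  have "1 \<le> N" using N[of N] by simp
  have grow: "g N / N \<le> g (2 ^ k * N) / (2 ^ k * N)" for k :: nat
  proof (induction k)
    case (Suc k)
    have "N \<le> 2 ^ k * N" using \<open>1 \<le> N\<close> by simp
    from N[OF this] have "2 * g (2 ^ k * N) \<le> g (2 * (2 ^ k * N))" by (auto simp: pos_less_divide_eq)
    then have "g (2 ^ k * N) / (2 ^ k * N) \<le> g (2 ^ Suc k * N) / (2 ^ Suc k * N)"
      using \<open>1 \<le> N\<close> by (simp add: field_simps)
    with Suc.IH show ?case by linarith
  qed simp
  have "filterlim (\<lambda>k::nat. 2 ^ k * N) at_top sequentially"
    using \<open>1 \<le> N\<close> by (intro filterlim_at_top_mult_tendsto_pos[OF tendsto_const]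
      filterlim_at_infinity_imp_filterlim_at_top filterlim_realpow_sequentially_gt1) auto
  then have "((\<lambda>k::nat. g (2 ^ k * N) / (2 ^ k * N)) \<longlongrightarrow> 0) sequentially"
    by (rule filterlim_compose[OF sublinear])
  then have "g N / N \<le> 0" by (rule tendsto_lowerbound) (use grow in auto)
  with N[of N] show False by (simp add: divide_le_0_iff)
qed

lemma regularly_varying_0_if_antimono:
  fixes g :: "real \<Rightarrow> real"
  assumes anti: "antimono_on {x0..} g" and lb: "\<And>x. x0 \<le> x \<Longrightarrow> c \<le> g x" and c: "0 < c"
  shows "regularly_varying g 0"
proof -
  define L where "L = Inf (g ` {x0..})"
  have bdd: "bdd_below (g ` {x0..})" using lb by (intro bdd_belowI2[where m = c]) simp
  have "c \<le> L" unfolding L_def using lb by (auto intro: cINF_greatest)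
  have lim: "(g \<longlongrightarrow> L) at_top"
  proof (rule decreasing_tendsto)
    show "\<forall>\<^sub>F x in at_top. L \<le> g x"
      using eventually_ge_at_top[of x0] by eventually_elim (use bdd in \<open>auto simp: L_def intro: cINF_lower\<close>)
  next
    fix a assume "L < a"
    have "\<exists>x1\<ge>x0. g x1 < a"
    proof (rule ccontr)
      assume "\<not> (\<exists>x1\<ge>x0. g x1 < a)"
      then have "a \<le> L" unfolding L_def by (auto intro!: cINF_greatest)
      with \<open>L < a\<close> show False by simp
    qed
    then obtain x1 where x1: "x0 \<le> x1" "g x1 < a" by blast
    show "\<forall>\<^sub>F x in at_top. g x < a"
      using eventually_ge_at_top[of x1]
    proof eventually_elim
      case (elim x)
      then have "g x \<le> g x1" using monotone_onD[OF anti, of x1 x] x1 by auto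
      then show ?case using x1 by simp
    qed
  qed
  show ?thesis unfolding regularly_varying_def
  proof (intro allI impI)
    fix x :: real assume "0 < x"
    then have "filterlim (\<lambda>n. x * n) at_top at_top"
      by (rule filterlim_tendsto_pos_mult_at_top[OF tendsto_const _ filterlim_ident])
    then have "((\<lambda>n. g (x * n) / g n) \<longlongrightarrow> L / L) at_top"
      using \<open>c \<le> L\<close> c by (intro tendsto_divide filterlim_compose[OF lim] lim) auto
    then show "((\<lambda>n. g (x * n) / g n) \<longlongrightarrow> x powr 0) at_top" using \<open>c \<le> L\<close> c \<open>0 < x\<close> by simp
  qed
qed

section \<open>Covariance ratios of a regularly varying function\<close>

definition cov_ratio_of :: "(real \<Rightarrow> real) \<Rightarrow> real \<Rightarrow> real \<Rightarrow> real" where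
  "cov_ratio_of g z n = (g (\<bar>z + 1\<bar> * n) + g (\<bar>z - 1\<bar> * n) - 2 * g (\<bar>z\<bar> * n)) / (2 * g n)"

text \<open>For \<open>a = 0\<close> this uses \<open>0 powr 0 = 0\<close>.\<close>
lemma cov_target_eq:
  assumes "0 \<le> a"
  shows "cov_target a z = (\<bar>z + 1\<bar> powr a + \<bar>z - 1\<bar> powr a - 2 * \<bar>z\<bar> powr a) / 2"
  using assms by (cases "a = 0") (auto simp: cov_target_def abs_minus_commute field_simps)

lemma cov_target_1: "0 \<le> a \<Longrightarrow> cov_target a 1 = 2 powr (a - 1) - 1"
  by (auto simp: cov_target_def powr_diff)

lemma tendsto_cov_ratio_of_if_regularly_varying:
  assumes g0: "g 0 = 0" and rv: "regularly_varying g a" and a: "0 \<le> a"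
  shows "(cov_ratio_of g z \<longlongrightarrow> cov_target a z) at_top"
proof -
  have ratio: "((\<lambda>n. g (x * n) / g n) \<longlongrightarrow> x powr a) at_top" if "0 \<le> x" for x
    using rv that g0 by (cases "x = 0") (auto simp: regularly_varying_def)
  have eq: "cov_ratio_of g z
      = (\<lambda>n. (g (\<bar>z + 1\<bar> * n) / g n + g (\<bar>z - 1\<bar> * n) / g n - 2 * (g (\<bar>z\<bar> * n) / g n)) / 2)"
  proof
    fix n
    show "cov_ratio_of g z n
        = (g (\<bar>z + 1\<bar> * n) / g n + g (\<bar>z - 1\<bar> * n) / g n - 2 * (g (\<bar>z\<bar> * n) / g n)) / 2"
      by (cases "g n = 0") (simp_all add: cov_ratio_of_def field_simps)
  qed
  show ?thesis
    unfolding eq cov_target_eq[OF a] by (intro tendsto_intros ratio) auto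
qed

lemma eventually_ge_if_monotone:
  fixes g :: "real \<Rightarrow> real"
  assumes mono: "mono_on {x0..} g \<or> antimono_on {x0..} g" and unbdd: "\<And>x. \<exists>y\<ge>x. c \<le> g y"
  shows "\<forall>\<^sub>F x in at_top. c \<le> g x"
  using mono
proof
  assume "mono_on {x0..} g"
  obtain y where "x0 \<le> y" "c \<le> g y" using unbdd by blast
  show ?thesis
    using eventually_ge_at_top[of y]
  proof eventually_elim
    case (elim x)
    then show ?case using mono_onD[OF \<open>mono_on {x0..} g\<close>, of y x] \<open>x0 \<le> y\<close> \<open>c \<le> g y\<close> by auto
  qed
next
  assume anti: "antimono_on {x0..} g"
  show ?thesis
    using eventually_ge_at_top[of x0]
  proof eventually_elim
    case (elim x)
    obtain y where "x \<le> y" "c \<le> g y" using unbdd by blast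
    then show ?case using monotone_onD[OF anti, of x y] elim by auto
  qed
qed

lemma cov_ratio_of_1:
  assumes "g 0 = 0" "g n \<noteq> 0" "0 \<le> n"
  shows "g (2 * n) / g n = 2 * cov_ratio_of g 1 n + 2"
  using assms by (simp add: cov_ratio_of_def field_simps)

lemma cov_ratio_of_2:
  assumes "g 0 = 0" "g n \<noteq> 0" "0 \<le> n"
  shows "g (3 * n) / g n = 2 * cov_ratio_of g 2 n - 1 + 2 * (g (2 * n) / g n)"
  using assms by (simp add: cov_ratio_of_def field_simps)

lemma regularly_varying_if_cov_ratio_limits:
  fixes g :: "real \<Rightarrow> real"
  assumes g0: "g 0 = 0" and sublinear: "((\<lambda>y. g y / y) \<longlongrightarrow> 0) at_top"
    and mono: "mono_on {x0..} g \<or> antimono_on {x0..} g"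
    and lb: "\<forall>\<^sub>F x in at_top. c \<le> g x" and c: "0 < c"
    and lim1: "(cov_ratio_of g 1 \<longlongrightarrow> c1) at_top" and lim2: "(cov_ratio_of g 2 \<longlongrightarrow> c2) at_top"
  shows "\<exists>a\<in>{0..1}. regularly_varying g a"
  using mono
proof
  assume anti: "antimono_on {x0..} g"
  obtain x1 where "\<And>x. x1 \<le> x \<Longrightarrow> c \<le> g x" using lb unfolding eventually_at_top_linorder by blast
  then have "regularly_varying g 0"
    using c by (intro regularly_varying_0_if_antimono[of "max x0 x1"] monotone_on_subset[OF anti]) auto
  then show ?thesis by force
next
  assume mono: "mono_on {x0..} g"
  have pos: "\<forall>\<^sub>F x in at_top. 0 < g x" using lb by eventually_elim (use c in auto)
  have ev: "\<forall>\<^sub>F n in at_top. g n \<noteq> 0 \<and> 0 \<le> n" using pos eventually_ge_at_top[of 0] by eventually_elim auto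
  have "((\<lambda>n. 2 * cov_ratio_of g 1 n + 2) \<longlongrightarrow> 2 * c1 + 2) at_top" by (intro tendsto_intros lim1)
  then have L2: "((\<lambda>n. g (2 * n) / g n) \<longlongrightarrow> 2 * c1 + 2) at_top"
    by (rule Lim_transform_eventually) (use ev in \<open>auto elim!: eventually_mono simp: cov_ratio_of_1[of g, OF g0]\<close>)
  have "((\<lambda>n. 2 * cov_ratio_of g 2 n - 1 + 2 * (g (2 * n) / g n)) \<longlongrightarrow> 2 * c2 - 1 + 2 * (2 * c1 + 2)) at_top"
    by (intro tendsto_intros lim2 L2)
  then have L3: "((\<lambda>n. g (3 * n) / g n) \<longlongrightarrow> 2 * c2 - 1 + 2 * (2 * c1 + 2)) at_top"
    by (rule Lim_transform_eventually) (use ev in \<open>auto elim!: eventually_mono simp: cov_ratio_of_2[of g, OF g0]\<close>)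
  obtain \<kappa> where "0 \<le> \<kappa>" "regularly_varying g \<kappa>"
    using regularly_varying_if_ratio_limits_2_3[OF mono pos L2 L3] by blast
  moreover have "\<kappa> \<le> 1" using regularly_varying_index_le_1[OF sublinear pos] \<open>regularly_varying g \<kappa>\<close> .
  ultimately show ?thesis by auto
qed

lemma regularly_varying_iff_tendsto_cov_ratio_of:
  fixes g :: "real \<Rightarrow> real"
  assumes g0: "g 0 = 0" and sublinear: "((\<lambda>y. g y / y) \<longlongrightarrow> 0) at_top"
    and mono: "mono_on {x0..} g \<or> antimono_on {x0..} g"
    and lb: "\<forall>\<^sub>F x in at_top. c \<le> g x" and c: "0 < c" and a: "a \<in> {0..1}"
  shows "regularly_varying g a \<longleftrightarrow> (\<forall>z. (cov_ratio_of g z \<longlongrightarrow> cov_target a z) at_top)"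
proof
  assume "regularly_varying g a"
  then show "\<forall>z. (cov_ratio_of g z \<longlongrightarrow> cov_target a z) at_top"
    using tendsto_cov_ratio_of_if_regularly_varying[of g, OF g0] a by auto
next
  assume lim: "\<forall>z. (cov_ratio_of g z \<longlongrightarrow> cov_target a z) at_top"
  then obtain b where b: "b \<in> {0..1}" "regularly_varying g b"
    using regularly_varying_if_cov_ratio_limits[OF g0 sublinear mono lb c] by blast
  have "(cov_ratio_of g 1 \<longlongrightarrow> 2 powr (b - 1) - 1) at_top"
    using tendsto_cov_ratio_of_if_regularly_varying[of g, OF g0 b(2), of 1] cov_target_1[of b] b(1) by simp
  moreover have "(cov_ratio_of g 1 \<longlongrightarrow> 2 powr (a - 1) - 1) at_top"
    using lim[rule_format, of 1] cov_target_1[of a] a by simp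
  ultimately have "2 powr (b - 1) - 1 = 2 powr (a - 1) - 1"
    by (rule tendsto_unique[OF trivial_limit_at_top_linorder])
  then have "b = a" by (simp add: powr_inj)
  with b show "regularly_varying g a" by simp
qed

lemma tendsto_cov_ratio_of_1_2_iff:
  fixes g :: "real \<Rightarrow> real"
  assumes g0: "g 0 = 0" and sublinear: "((\<lambda>y. g y / y) \<longlongrightarrow> 0) at_top"
    and mono: "mono_on {x0..} g \<or> antimono_on {x0..} g"
    and lb: "\<forall>\<^sub>F x in at_top. c \<le> g x" and c: "0 < c"
  shows "(\<exists>c1 c2. (cov_ratio_of g 1 \<longlongrightarrow> c1) at_top \<and> (cov_ratio_of g 2 \<longlongrightarrow> c2) at_top)
    \<longleftrightarrow> (\<exists>a\<in>{0..1}. regularly_varying g a)"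
  using regularly_varying_if_cov_ratio_limits[OF g0 sublinear mono lb c]
    tendsto_cov_ratio_of_if_regularly_varying[of g, OF g0]
  by fastforce

section \<open>Second moments of the point process\<close>

definition overlap :: "real set \<Rightarrow> real set \<Rightarrow> real \<Rightarrow> real" where
  "overlap B C x = measure lborel {y \<in> C. x + y \<in> B}"

lemma overlap_nonneg [simp]: "0 \<le> overlap B C x"
  by (simp add: overlap_def)

lemma overlap_Icc: "overlap {a..b} {c..d} x = max 0 (min d (b - x) - max c (a - x))"
proof -
  have "{y \<in> {c..d}. x + y \<in> {a..b}} = {max c (a - x) .. min d (b - x)}" by auto
  then show ?thesis unfolding overlap_def by (simp only: measure_lborel_Icc) (simp add: max_def)
qed

lemma sets_pair_shift:
  assumes [measurable]: "B \<in> sets borel" "C \<in> sets borel"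
  shows "{p :: real \<times> real. fst p + snd p \<in> B \<and> snd p \<in> C} \<in> sets (borel \<Otimes>\<^sub>M borel)"
proof -
  have "{p \<in> space (borel \<Otimes>\<^sub>M borel). fst p + snd p \<in> B \<and> snd p \<in> C} \<in> sets (borel \<Otimes>\<^sub>M borel)"
    by measurable
  then show ?thesis by (simp add: space_pair_measure)
qed

lemma emeasure_lborel_shift:
  assumes "B \<in> sets borel"
  shows "emeasure lborel {x. x + y \<in> B} = emeasure lborel (B :: real set)"
proof -
  have "emeasure lborel B = emeasure (distr lborel borel ((+) y)) B"
    by (simp only: lborel_distr_plus)
  also have "\<dots> = emeasure lborel {x. x + y \<in> B}"
    using assms by (subst emeasure_distr) (auto simp: add.commute vimage_def)
  finally show ?thesis ..
qed

lemma nn_integral_indicator_emeasure_shift: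
  fixes Q :: "real measure"
  assumes Q: "sigma_finite_measure Q" "sets Q = sets borel"
    and [measurable]: "B \<in> sets borel" "C \<in> sets borel"
  shows "(\<integral>\<^sup>+y. indicator C y * emeasure Q {x. x + y \<in> B} \<partial>lborel)
       = (\<integral>\<^sup>+x. emeasure lborel {y \<in> C. x + y \<in> B} \<partial>Q)"
proof -
  interpret pair_sigma_finite Q lborel
    using Q(1) by (simp add: pair_sigma_finite.intro lborel.sigma_finite_measure_axioms)
  define S where "S = {p :: real \<times> real. fst p + snd p \<in> B \<and> snd p \<in> C}"
  have S: "S \<in> sets (Q \<Otimes>\<^sub>M lborel)"
    unfolding sets_pair_measure_cong[OF Q(2) sets_lborel] S_def by (rule sets_pair_shift) fact+
  have "(\<integral>\<^sup>+y. indicator C y * emeasure Q {x. x + y \<in> B} \<partial>lborel)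
      = (\<integral>\<^sup>+y. emeasure Q ((\<lambda>x. (x, y)) -` S) \<partial>lborel)"
    by (intro nn_integral_cong) (auto simp: S_def indicator_def)
  also have "\<dots> = emeasure (Q \<Otimes>\<^sub>M lborel) S" by (rule emeasure_pair_measure_alt2[OF S, symmetric])
  also have "\<dots> = (\<integral>\<^sup>+x. emeasure lborel (Pair x -` S) \<partial>Q)" by (rule lborel.emeasure_pair_measure_alt[OF S])
  also have "\<dots> = (\<integral>\<^sup>+x. emeasure lborel {y \<in> C. x + y \<in> B} \<partial>Q)"
    by (intro nn_integral_cong arg_cong[where f = "emeasure lborel"]) (auto simp: S_def)
  finally show ?thesis .
qed

lemma integrable_overlap:
  fixes Q :: "real measure"
  assumes Q: "finite_measure Q" "sets Q = sets borel"
    and [measurable]: "B \<in> sets borel" "C \<in> sets borel" and C: "bounded C"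
  shows "integrable Q (overlap B C)"
proof -
  interpret Q: finite_measure Q by fact
  interpret pair_sigma_finite Q lborel
    by (simp add: pair_sigma_finite.intro Q.sigma_finite_measure_axioms lborel.sigma_finite_measure_axioms)
  have "(\<lambda>x. emeasure lborel (Pair x -` {p. fst p + snd p \<in> B \<and> snd p \<in> C})) \<in> borel_measurable Q"
    by (rule measurable_emeasure_Pair1)
       (unfold sets_pair_measure_cong[OF Q(2) sets_lborel], rule sets_pair_shift, fact+)
  then have "(\<lambda>x. emeasure lborel {y \<in> C. x + y \<in> B}) \<in> borel_measurable Q"
    by (simp add: vimage_def conj_commute)
  then have "overlap B C \<in> borel_measurable Q"
    unfolding overlap_def measure_def by (rule borel_measurable_enn2real)
  moreover have "overlap B C x \<le> measure lborel C" for x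
    using emeasure_bounded_finite[OF C]
    unfolding overlap_def by (intro measure_mono_fmeasurable fmeasurableI) auto
  ultimately show ?thesis
    by (intro Q.integrable_const_bound[where B = "measure lborel C"]) auto
qed

lemma integral_indicator_measure_shift:
  fixes Q :: "real measure"
  assumes Q: "finite_measure Q" "sets Q = sets borel"
    and [measurable]: "B \<in> sets borel" "C \<in> sets borel" and C: "bounded C"
  shows "integrable lborel (\<lambda>y. indicator C y * measure Q {x. x + y \<in> B})" (is ?int)
    and "(\<integral>y. indicator C y * measure Q {x. x + y \<in> B} \<partial>lborel) = (\<integral>x. overlap B C x \<partial>Q)" (is ?eq)
proof -
  interpret Q: finite_measure Q by fact
  interpret pair_sigma_finite Q lborel
    by (simp add: pair_sigma_finite.intro Q.sigma_finite_measure_axioms lborel.sigma_finite_measure_axioms)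
  have "(\<lambda>y. emeasure Q ((\<lambda>x. (x, y)) -` {p. fst p + snd p \<in> B \<and> snd p \<in> UNIV})) \<in> borel_measurable lborel"
    by (rule measurable_emeasure_Pair2)
       (unfold sets_pair_measure_cong[OF Q(2) sets_lborel], rule sets_pair_shift, simp_all)
  then have [measurable]: "(\<lambda>y. measure Q {x. x + y \<in> B}) \<in> borel_measurable borel"
    by (simp add: measure_def vimage_def)
  have "integrable lborel (\<lambda>y. indicator C y *\<^sub>R measure Q {x. x + y \<in> B})"
    using emeasure_bounded_finite[OF C] Q.bounded_measure
    by (intro integrableI_bounded_set_indicator[where B = "measure Q (space Q)"]) auto
  then show ?int by simp
  have "ennreal (\<integral>y. indicator C y * measure Q {x. x + y \<in> B} \<partial>lborel)
      = (\<integral>\<^sup>+y. indicator C y * emeasure Q {x. x + y \<in> B} \<partial>lborel)"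
    using \<open>?int\<close> by (subst nn_integral_eq_integral[symmetric])
      (auto intro!: nn_integral_cong simp: Q.emeasure_eq_measure indicator_def)
  also have "\<dots> = (\<integral>\<^sup>+x. emeasure lborel {y \<in> C. x + y \<in> B} \<partial>Q)"
    using Q.sigma_finite_measure_axioms Q(2) by (rule nn_integral_indicator_emeasure_shift) measurable
  also have "\<dots> = ennreal (\<integral>x. overlap B C x \<partial>Q)"
  proof -
    have "emeasure lborel {y \<in> C. x + y \<in> B} = ennreal (overlap B C x)" for x
    proof -
      have "bounded {y \<in> C. x + y \<in> B}" using C by (rule bounded_subset) auto
      from emeasure_bounded_finite[OF this] show ?thesis by (simp add: overlap_def emeasure_eq_ennreal_measure)
    qed
    then show ?thesis using integrable_overlap[OF Q assms(3,4) C] by (simp add: nn_integral_eq_integral)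
  qed
  finally show ?eq
    by (subst (asm) ennreal_inj) (auto intro!: integral_nonneg_AE)
qed

text \<open>The layer-cake formula for \<open>Q\<close>: the case \<open>B = [0, \<infinity>)\<close>, \<open>C = [-y, 0]\<close> of the overlap
  formula, reflected by \<open>x \<mapsto> -x\<close>.\<close>
lemma has_integral_measure_atLeast:
  fixes Q :: "real measure"
  assumes Q: "finite_measure Q" "sets Q = sets borel" and y: "0 \<le> y"
  shows "((\<lambda>x. measure Q {x..}) has_integral (\<integral>u. max 0 (min y u) \<partial>Q)) {0..y}"
proof -
  define f where "f = (\<lambda>t :: real. indicator {-y..0} t * measure Q {u. u + t \<in> {0..}})"
  have "overlap {0..} {-y..0} u = max 0 (min y u)" for u
  proof -
    have "{t \<in> {-y..0}. u + t \<in> {0..}} = {max (-y) (-u)..0}" by auto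
    then show ?thesis using y by (simp add: overlap_def max_def min_def)
  qed
  then have int: "integrable lborel f" and eq: "integral\<^sup>L lborel f = (\<integral>u. max 0 (min y u) \<partial>Q)"
    using integral_indicator_measure_shift[OF Q, of "{0..}" "{-y..0}"] by (simp_all add: f_def)
  have reflect: "f (0 + (-1) * x) = indicator {0..y} x * measure Q {x..}" for x
    by (auto simp: f_def indicator_def atLeast_def)
  have "integrable lborel (\<lambda>x. indicator {0..y} x * measure Q {x..})"
    using lborel_integrable_real_affine_iff[of "-1" f 0] int by (simp only: reflect)
  moreover have "integral\<^sup>L lborel (\<lambda>x. indicator {0..y} x * measure Q {x..}) = integral\<^sup>L lborel f"
    using lborel_integral_real_affine[of "-1" f 0] by (simp only: reflect) simp
  ultimately have "((\<lambda>x. indicator {0..y} x * measure Q {x..}) has_integral (\<integral>u. max 0 (min y u) \<partial>Q)) UNIV"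
    using eq has_integral_integral_lborel[of "\<lambda>x. indicator {0..y} x * measure Q {x..}"] by simp
  moreover have "(\<lambda>x. indicator {0..y} x * measure Q {x..}) = (\<lambda>x. if x \<in> {0..y} then measure Q {x..} else 0)"
    by (auto simp: indicator_def)
  ultimately show ?thesis by (simp only: has_integral_restrict_UNIV)
qed

definition beta_integral :: "real measure \<Rightarrow> real measure \<Rightarrow> (real \<Rightarrow> real) \<Rightarrow> real" where
  "beta_integral Bp Bn f = (\<integral>x. f x \<partial>Bp) - (\<integral>x. f x \<partial>Bn)"

lemma beta_integral_add:
  "integrable P f \<Longrightarrow> integrable N f \<Longrightarrow> integrable P g \<Longrightarrow> integrable N g \<Longrightarrow>
    beta_integral P N (\<lambda>x. f x + g x) = beta_integral P N f + beta_integral P N g"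
  and beta_integral_diff:
  "integrable P f \<Longrightarrow> integrable N f \<Longrightarrow> integrable P g \<Longrightarrow> integrable N g \<Longrightarrow>
    beta_integral P N (\<lambda>x. f x - g x) = beta_integral P N f - beta_integral P N g"
  by (simp_all add: beta_integral_def)

lemma beta_integral_cmult: "beta_integral P N (\<lambda>x. c * f x) = c * beta_integral P N f"
  and beta_integral_divide: "beta_integral P N (\<lambda>x. f x / c) = beta_integral P N f / c"
  by (simp_all add: beta_integral_def right_diff_distrib diff_divide_distrib)

lemma card_mult_card_eq:
  assumes "finite (X w \<inter> B)" "finite (X w \<inter> C)"
  shows "card (X w \<inter> B) * card (X w \<inter> C) = card (X w \<inter> (B \<inter> C)) + card (pairs2 X w \<inter> (B \<times> C))"
proof -
  have fin: "finite (pairs2 X w \<inter> (B \<times> C))" "finite ((\<lambda>x. (x, x)) ` (X w \<inter> (B \<inter> C)))"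
    using assms by (auto intro: finite_subset[of _ "(X w \<inter> B) \<times> (X w \<inter> C)"] simp: pairs2_def)
  have "card (X w \<inter> B) * card (X w \<inter> C) = card ((X w \<inter> B) \<times> (X w \<inter> C))"
    by (simp add: card_cartesian_product)
  also have "(X w \<inter> B) \<times> (X w \<inter> C) = (pairs2 X w \<inter> (B \<times> C)) \<union> (\<lambda>x. (x, x)) ` (X w \<inter> (B \<inter> C))"
    by (auto simp: pairs2_def)
  also have "card \<dots> = card (pairs2 X w \<inter> (B \<times> C)) + card ((\<lambda>x. (x, x)) ` (X w \<inter> (B \<inter> C)))"
    using fin by (intro card_Un_disjoint) (auto simp: pairs2_def)
  also have "card ((\<lambda>x. (x, x)) ` (X w \<inter> (B \<inter> C))) = card (X w \<inter> (B \<inter> C))"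
    by (rule card_image) (auto simp: inj_on_def)
  finally show ?thesis by simp
qed

lemma Gb_0: "Gb Bp Bn 0 = 0"
  by (simp add: Gb_def)

locale tpc_point_process =
  fixes M :: "'w measure" and X :: "'w \<Rightarrow> real set" and A Bp Bn :: "real measure"
  assumes point_process: "point_process M X" and unit_intensity: "unit_intensity M X"
    and reduced_moment: "reduced_second_moment M X A" and decomposition: "finite_tpc_decomp A Bp Bn"
begin

sublocale prob_space M
  using point_process by (simp add: point_process_def)

sublocale Bp: finite_measure Bp
  using decomposition by (simp add: finite_tpc_decomp_def)

sublocale Bn: finite_measure Bn
  using decomposition by (simp add: finite_tpc_decomp_def)

lemma sets_Bp [measurable_cong]: "sets Bp = sets borel"
  and sets_Bn [measurable_cong]: "sets Bn = sets borel"
  and sets_A [measurable_cong]: "sets A = sets borel"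
  using decomposition reduced_moment by (simp_all add: finite_tpc_decomp_def reduced_second_moment_def)

lemma cnt_nonneg [simp]: "0 \<le> cnt X w B"
  by (simp add: cnt_def)

lemma finite_points: "w \<in> space M \<Longrightarrow> bounded B \<Longrightarrow> finite (X w \<inter> B)"
  using point_process by (simp add: point_process_def)

lemma borel_measurable_cnt [measurable]:
  "B \<in> sets borel \<Longrightarrow> bounded B \<Longrightarrow> (\<lambda>w. cnt X w B) \<in> borel_measurable M"
  using point_process unfolding point_process_def cnt_def
  by (auto intro: measurable_compose[where g = real])

lemma nn_integral_cnt:
  assumes "B \<in> sets borel" "bounded B"
  shows "(\<integral>\<^sup>+w. ennreal (cnt X w B) \<partial>M) = emeasure lborel B"
proof -
  have "(\<integral>\<^sup>+w. ennreal (cnt X w B) \<partial>M) = (\<integral>\<^sup>+w. ecnt X w B \<partial>M)"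
    using finite_points assms(2)
    by (intro nn_integral_cong) (simp add: cnt_def ecnt_def ennreal_of_nat_eq_real_of_nat)
  then show ?thesis using unit_intensity assms(1) by (simp add: unit_intensity_def)
qed

lemma has_bochner_integral_cnt:
  assumes "B \<in> sets borel" "bounded B"
  shows "has_bochner_integral M (\<lambda>w. cnt X w B) (measure lborel B)"
  using nn_integral_cnt[OF assms] emeasure_bounded_finite[OF assms(2)] borel_measurable_cnt[OF assms]
  by (intro has_bochner_integral_nn_integral) (auto simp: emeasure_eq_ennreal_measure cnt_def[of X _ B])

lemma integrable_cnt: "B \<in> sets borel \<Longrightarrow> bounded B \<Longrightarrow> integrable M (\<lambda>w. cnt X w B)"
  and expectation_cnt: "B \<in> sets borel \<Longrightarrow> bounded B \<Longrightarrow> expectation (\<lambda>w. cnt X w B) = measure lborel B"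
  using has_bochner_integral_cnt by (auto simp: has_bochner_integral_iff)

lemma emeasure_A_shift:
  assumes [measurable]: "B \<in> sets borel" and "bounded B"
  shows "emeasure A {x. x + y \<in> B} = ennreal (measure lborel B + beta_of Bp Bn {x. x + y \<in> B})"
    and "0 \<le> measure lborel B + beta_of Bp Bn {x. x + y \<in> B}"
proof -
  define S where "S = {x. x + y \<in> B}"
  have [measurable]: "S \<in> sets borel" unfolding S_def by measurable
  have eq: "emeasure A S + ennreal (measure Bn S) = ennreal (measure lborel B + measure Bp S)"
    using decomposition emeasure_lborel_shift[OF assms(1), of y] emeasure_bounded_finite[OF assms(2)]
    by (simp add: finite_tpc_decomp_def S_def[symmetric] Bp.emeasure_eq_measure Bn.emeasure_eq_measure
        emeasure_eq_ennreal_measure ennreal_plus)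
  have "emeasure A S \<le> ennreal (measure lborel B + measure Bp S)" unfolding eq[symmetric] by simp
  then have "emeasure A S < \<top>" using ennreal_less_top le_less_trans by blast
  then obtain a where "emeasure A S = ennreal a" "0 \<le> a" by (cases "emeasure A S") auto
  with eq have "a + measure Bn S = measure lborel B + measure Bp S" "0 \<le> a"
    by (simp_all add: ennreal_plus[symmetric] del: ennreal_plus)
  with \<open>emeasure A S = ennreal a\<close> show "emeasure A S = ennreal (measure lborel B + beta_of Bp Bn S)"
    and "0 \<le> measure lborel B + beta_of Bp Bn S"
    by (simp_all add: beta_of_def algebra_simps)
qed

lemma nn_integral_card_pairs2:
  assumes [measurable]: "B \<in> sets borel" "C \<in> sets borel" and "bounded B" "bounded C"
  shows "(\<integral>\<^sup>+w. of_nat (card (pairs2 X w \<inter> (B \<times> C))) \<partial>M)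
       = (\<integral>\<^sup>+y. indicator C y * emeasure A {x. x + y \<in> B} \<partial>lborel)"
proof -
  have "(\<integral>\<^sup>+w. of_nat (card (pairs2 X w \<inter> (B \<times> C))) \<partial>M)
      = (\<integral>\<^sup>+w. (\<integral>\<^sup>+p. indicator (B \<times> C) p \<partial>count_space (pairs2 X w)) \<partial>M)"
  proof (intro nn_integral_cong)
    fix w assume "w \<in> space M"
    then have "finite (pairs2 X w \<inter> (B \<times> C))"
      using finite_points[OF _ \<open>bounded B\<close>] finite_points[OF _ \<open>bounded C\<close>]
      by (auto intro: finite_subset[of _ "(X w \<inter> B) \<times> (X w \<inter> C)"] simp: pairs2_def)
    then show "of_nat (card (pairs2 X w \<inter> (B \<times> C)))
        = (\<integral>\<^sup>+p. indicator (B \<times> C) p \<partial>count_space (pairs2 X w))"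
      by (subst nn_integral_indicator') (auto simp: emeasure_count_space_finite Int_commute)
  qed
  also have "\<dots> = (\<integral>\<^sup>+y. (\<integral>\<^sup>+x. indicator (B \<times> C) (x + y, y) \<partial>A) \<partial>lborel)"
    using reduced_moment unfolding reduced_second_moment_def by (simp add: borel_measurable_indicator)
  also have "\<dots> = (\<integral>\<^sup>+y. indicator C y * emeasure A {x. x + y \<in> B} \<partial>lborel)"
  proof (intro nn_integral_cong)
    fix y
    have "(\<integral>\<^sup>+x. indicator (B \<times> C) (x + y, y) \<partial>A) = (\<integral>\<^sup>+x. indicator C y * indicator {x. x + y \<in> B} x \<partial>A)"
      by (intro nn_integral_cong) (auto simp: indicator_def)
    then show "(\<integral>\<^sup>+x. indicator (B \<times> C) (x + y, y) \<partial>A) = indicator C y * emeasure A {x. x + y \<in> B}"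
      by (simp add: nn_integral_cmult_indicator)
  qed
  finally show ?thesis .
qed

lemma nn_integral_cnt_mult:
  assumes [measurable]: "B \<in> sets borel" "C \<in> sets borel" and bdd: "bounded B" "bounded C"
  shows "(\<integral>\<^sup>+w. ennreal (cnt X w B * cnt X w C) \<partial>M)
       = emeasure lborel (B \<inter> C) + (\<integral>\<^sup>+y. indicator C y * emeasure A {x. x + y \<in> B} \<partial>lborel)"
proof -
  have card_eq: "cnt X w B * cnt X w C = cnt X w (B \<inter> C) + real (card (pairs2 X w \<inter> (B \<times> C)))"
    if "w \<in> space M" for w
    using card_mult_card_eq[of X w B C, OF finite_points[OF that bdd(1)] finite_points[OF that bdd(2)]]
    unfolding cnt_def by (metis of_nat_add of_nat_mult)
  have [measurable]: "(\<lambda>w. cnt X w B) \<in> borel_measurable M" "(\<lambda>w. cnt X w C) \<in> borel_measurable M"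
    "(\<lambda>w. cnt X w (B \<inter> C)) \<in> borel_measurable M"
    using bdd by (simp_all add: bounded_Int)
  have meas_pairs: "(\<lambda>w. real (card (pairs2 X w \<inter> (B \<times> C)))) \<in> borel_measurable M"
    using card_eq
    by (subst measurable_cong[where g = "\<lambda>w. cnt X w B * cnt X w C - cnt X w (B \<inter> C)"]) auto
  have "(\<integral>\<^sup>+w. ennreal (cnt X w B * cnt X w C) \<partial>M)
      = (\<integral>\<^sup>+w. ennreal (cnt X w (B \<inter> C)) + ennreal (real (card (pairs2 X w \<inter> (B \<times> C)))) \<partial>M)"
    by (intro nn_integral_cong) (simp add: card_eq ennreal_plus)
  also have "\<dots> = (\<integral>\<^sup>+w. ennreal (cnt X w (B \<inter> C)) \<partial>M)
      + (\<integral>\<^sup>+w. of_nat (card (pairs2 X w \<inter> (B \<times> C))) \<partial>M)"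
    using meas_pairs by (subst nn_integral_add) (auto simp: ennreal_of_nat_eq_real_of_nat)
  finally show ?thesis
    using bdd by (simp add: nn_integral_cnt[of "B \<inter> C"] nn_integral_card_pairs2 bounded_Int)
qed

lemma nn_integral_indicator_A_shift:
  assumes [measurable]: "B \<in> sets borel" "C \<in> sets borel" and bdd: "bounded B" "bounded C"
  shows "(\<integral>\<^sup>+y. indicator C y * emeasure A {x. x + y \<in> B} \<partial>lborel)
       = ennreal (measure lborel B * measure lborel C + beta_integral Bp Bn (overlap B C))"
    and "0 \<le> measure lborel B * measure lborel C + beta_integral Bp Bn (overlap B C)"
proof -
  define a where "a y = indicator C y * (measure lborel B + beta_of Bp Bn {x. x + y \<in> B})" for y
  have a: "a y = measure lborel B * indicator C y + indicator C y * measure Bp {x. x + y \<in> B}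
      - indicator C y * measure Bn {x. x + y \<in> B}" for y
    by (simp add: a_def beta_of_def algebra_simps)
  note shift_Bp = integral_indicator_measure_shift[OF Bp.finite_measure_axioms sets_Bp assms(1,2) bdd(2)]
    and shift_Bn = integral_indicator_measure_shift[OF Bn.finite_measure_axioms sets_Bn assms(1,2) bdd(2)]
  have C: "integrable lborel (indicator C :: real \<Rightarrow> real)"
    using emeasure_bounded_finite[OF bdd(2)] by (intro integrable_real_indicator) auto
  have "integrable lborel a" unfolding a using C shift_Bp(1) shift_Bn(1) by auto
  moreover have "integral\<^sup>L lborel a = measure lborel B * measure lborel C + beta_integral Bp Bn (overlap B C)"
    unfolding a using C shift_Bp shift_Bn by (simp add: beta_integral_def)
  moreover have "indicator C y * emeasure A {x. x + y \<in> B} = ennreal (a y)" "0 \<le> a y" for y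
    using emeasure_A_shift[OF assms(1) bdd(1), of y] by (auto simp: a_def indicator_def)
  moreover from this have "0 \<le> integral\<^sup>L lborel a" by (simp add: integral_nonneg_AE)
  ultimately show "(\<integral>\<^sup>+y. indicator C y * emeasure A {x. x + y \<in> B} \<partial>lborel)
       = ennreal (measure lborel B * measure lborel C + beta_integral Bp Bn (overlap B C))"
    and "0 \<le> measure lborel B * measure lborel C + beta_integral Bp Bn (overlap B C)"
    by (simp_all add: nn_integral_eq_integral)
qed

lemma has_bochner_integral_cnt_mult:
  assumes "B \<in> sets borel" "C \<in> sets borel" "bounded B" "bounded C"
  shows "has_bochner_integral M (\<lambda>w. cnt X w B * cnt X w C)
    (measure lborel (B \<inter> C) + measure lborel B * measure lborel C + beta_integral Bp Bn (overlap B C))"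
proof (rule has_bochner_integral_nn_integral)
  have "emeasure lborel (B \<inter> C) = ennreal (measure lborel (B \<inter> C))"
    using emeasure_bounded_finite[of "B \<inter> C"] assms by (simp add: bounded_Int emeasure_eq_ennreal_measure)
  then show "(\<integral>\<^sup>+w. ennreal (cnt X w B * cnt X w C) \<partial>M)
    = ennreal (measure lborel (B \<inter> C) + measure lborel B * measure lborel C + beta_integral Bp Bn (overlap B C))"
    using nn_integral_indicator_A_shift[OF assms]
    by (simp add: nn_integral_cnt_mult[OF assms] ennreal_plus add.assoc)
  show "0 \<le> measure lborel (B \<inter> C) + measure lborel B * measure lborel C + beta_integral Bp Bn (overlap B C)"
    using nn_integral_indicator_A_shift(2)[OF assms] measure_nonneg[of lborel "B \<inter> C"] by linarith
  show "(\<lambda>w. cnt X w B * cnt X w C) \<in> borel_measurable M" using assms by measurable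
qed simp

lemma integrable_bounded_beta:
  fixes f :: "real \<Rightarrow> real"
  assumes "f \<in> borel_measurable borel" "\<And>x. \<bar>f x\<bar> \<le> K"
  shows "integrable Bp f" "integrable Bn f"
  using assms by (auto intro!: Bp.integrable_const_bound[where B = K] Bn.integrable_const_bound[where B = K])

lemma beta_integral_const: "beta_integral Bp Bn (\<lambda>_. c) = c * beta_of Bp Bn UNIV"
  using sets_eq_imp_space_eq[OF sets_Bp] sets_eq_imp_space_eq[OF sets_Bn]
  by (simp add: beta_integral_def beta_of_def algebra_simps)

lemma tendsto_beta_integral:
  fixes s :: "real \<Rightarrow> real \<Rightarrow> real"
  assumes "\<And>t. s t \<in> borel_measurable borel" "f \<in> borel_measurable borel"
    and "\<And>t x. \<bar>s t x\<bar> \<le> K" and "\<And>x. ((\<lambda>t. s t x) \<longlongrightarrow> f x) at_top"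
  shows "((\<lambda>t. beta_integral Bp Bn (s t)) \<longlongrightarrow> beta_integral Bp Bn f) at_top"
  unfolding beta_integral_def
proof (intro tendsto_diff)
  show "((\<lambda>t. integral\<^sup>L Bp (s t)) \<longlongrightarrow> integral\<^sup>L Bp f) at_top"
    by (rule integral_dominated_convergence_at_top[where w = "\<lambda>_. K"]) (use assms in auto)
  show "((\<lambda>t. integral\<^sup>L Bn (s t)) \<longlongrightarrow> integral\<^sup>L Bn f) at_top"
    by (rule integral_dominated_convergence_at_top[where w = "\<lambda>_. K"]) (use assms in auto)
qed

lemma cov_cnt_eq:
  assumes B: "B \<in> sets borel" "bounded B" and C: "C \<in> sets borel" "bounded C"
  shows "cov_cnt M X B C = measure lborel (B \<inter> C) + beta_integral Bp Bn (overlap B C)"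
proof -
  note BC = has_bochner_integral_cnt_mult[OF B(1) C(1) B(2) C(2)]
  have "cov_cnt M X B C = expectation (\<lambda>w. cnt X w B * cnt X w C - measure lborel C * cnt X w B
      - measure lborel B * cnt X w C + measure lborel B * measure lborel C)"
    unfolding cov_cnt_def expectation_cnt[OF B] expectation_cnt[OF C] by (simp add: algebra_simps)
  also have "\<dots> = measure lborel (B \<inter> C) + beta_integral Bp Bn (overlap B C)"
    using BC integrable_cnt[OF B] integrable_cnt[OF C] expectation_cnt[OF B] expectation_cnt[OF C]
    by (simp add: has_bochner_integral_iff prob_space)
  finally show ?thesis .
qed

lemma var_cnt_eq_cov_cnt: "var_cnt M X B = cov_cnt M X B B"
  by (simp add: var_cnt_def cov_cnt_def power2_eq_square)

lemma var_cnt_ge: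
  assumes B: "B \<in> sets borel" "bounded B" and d: "0 \<le> d" "\<And>k::nat. d \<le> \<bar>real k - measure lborel B\<bar>"
  shows "d\<^sup>2 \<le> var_cnt M X B"
proof -
  have "d\<^sup>2 \<le> (cnt X w B - measure lborel B)\<^sup>2" for w
    using d(2)[of "card (X w \<inter> B)"] d(1) abs_le_square_iff[of d "cnt X w B - measure lborel B"]
    by (simp add: cnt_def)
  moreover have "integrable M (\<lambda>w. (cnt X w B - measure lborel B)\<^sup>2)"
    using has_bochner_integral_cnt_mult[OF B(1) B(1) B(2) B(2)] integrable_cnt[OF B]
    by (simp add: has_bochner_integral_iff power2_eq_square algebra_simps)
  ultimately have "expectation (\<lambda>_. d\<^sup>2) \<le> expectation (\<lambda>w. (cnt X w B - measure lborel B)\<^sup>2)"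
    by (intro integral_mono) auto
  then show ?thesis by (simp add: var_cnt_def expectation_cnt[OF B] prob_space)
qed

lemma beta_integral_overlap_commute:
  assumes "B \<in> sets borel" "bounded B" "C \<in> sets borel" "bounded C"
  shows "beta_integral Bp Bn (overlap B C) = beta_integral Bp Bn (overlap C B)"
  using cov_cnt_eq[OF assms] cov_cnt_eq[OF assms(3,4,1,2)]
  by (simp add: cov_cnt_def mult.commute Int_commute)

lemma var_Lam:
  assumes "0 \<le> y"
  shows "var_cnt M X (Lam y t) = y + beta_integral Bp Bn (\<lambda>x. max 0 (y - \<bar>x\<bar>))"
proof -
  have "overlap {t..t + y} {t..t + y} = (\<lambda>x. max 0 (y - \<bar>x\<bar>))"
    by (auto simp: overlap_Icc max_def min_def abs_if)
  then show ?thesis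
    using cov_cnt_eq[of "{t..t + y}" "{t..t + y}"] assms by (simp add: var_cnt_eq_cov_cnt Lam_def)
qed

lemma tendsto_var_Lam_div:
  "((\<lambda>t. var_cnt M X (Lam t 0) / t) \<longlongrightarrow> 1 + beta_of Bp Bn UNIV) at_top"
proof -
  define s where "s t x = min 1 (max 0 (1 - \<bar>x\<bar> / t))" for t x :: real
  have "((\<lambda>t. beta_integral Bp Bn (s t)) \<longlongrightarrow> beta_integral Bp Bn (\<lambda>_. 1)) at_top"
  proof (rule tendsto_beta_integral[where K = 1])
    fix x :: real
    have "((\<lambda>t. \<bar>x\<bar> / t) \<longlongrightarrow> 0) at_top"
      by (intro tendsto_divide_0[OF tendsto_const] filterlim_at_top_imp_at_infinity filterlim_ident)
    then have "((\<lambda>t. min 1 (max 0 (1 - \<bar>x\<bar> / t))) \<longlongrightarrow> min 1 (max 0 (1 - 0))) at_top"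
      by (intro tendsto_min tendsto_max tendsto_diff tendsto_const)
    then show "((\<lambda>t. s t x) \<longlongrightarrow> 1) at_top" by (simp add: s_def)
  qed (auto simp: s_def[abs_def])
  moreover have "\<forall>\<^sub>F t in at_top. 1 + beta_integral Bp Bn (s t) = var_cnt M X (Lam t 0) / t"
    using eventually_ge_at_top[of 1]
  proof eventually_elim
    case (elim t)
    have "s t = (\<lambda>x. max 0 (t - \<bar>x\<bar>) / t)"
      using elim by (auto simp: s_def max_def field_simps)
    then show ?case
      using elim by (simp add: var_Lam beta_integral_divide add_divide_distrib)
  qed
  ultimately show ?thesis
    by (auto intro: Lim_transform_eventually tendsto_add[OF tendsto_const] simp: beta_integral_const)
qed

text \<open>\<open>\<beta>\<close> is symmetric: the overlap functions of \<open>[m, m + K]\<close> and \<open>[0, m]\<close>, taken in either order,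
  converge to the two reflected ramps as \<open>K \<rightarrow> \<infinity>\<close>.\<close>
lemma beta_integral_ramp_reflect:
  assumes m: "0 \<le> m"
  shows "beta_integral Bp Bn (\<lambda>x. max 0 (min m x)) = beta_integral Bp Bn (\<lambda>x. max 0 (min m (- x)))"
proof -
  have lim: "((\<lambda>K. beta_integral Bp Bn (s K)) \<longlongrightarrow> beta_integral Bp Bn f) at_top"
    if "\<And>K. s K \<in> borel_measurable borel" "f \<in> borel_measurable borel" "\<And>K x. \<bar>s K x\<bar> \<le> m"
      and "\<And>K x. \<bar>x\<bar> \<le> K \<Longrightarrow> s K x = f x" for s f
  proof (rule tendsto_beta_integral[OF that(1-3)])
    fix x
    show "((\<lambda>K. s K x) \<longlongrightarrow> f x) at_top"
      using eventually_ge_at_top[of "\<bar>x\<bar>"] by (rule tendsto_eventually[OF eventually_mono]) (rule that(4))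
  qed
  have "((\<lambda>K. beta_integral Bp Bn (overlap {m..m + K} {0..m})) \<longlongrightarrow> beta_integral Bp Bn (\<lambda>x. max 0 (min m x))) at_top"
  proof (rule lim)
    show "overlap {m..m + K} {0..m} \<in> borel_measurable borel" for K unfolding overlap_Icc[abs_def] by measurable
  qed (use m in \<open>auto simp: overlap_Icc max_def min_def\<close>)
  moreover have "((\<lambda>K. beta_integral Bp Bn (overlap {0..m} {m..m + K})) \<longlongrightarrow> beta_integral Bp Bn (\<lambda>x. max 0 (min m (- x)))) at_top"
  proof (rule lim)
    show "overlap {0..m} {m..m + K} \<in> borel_measurable borel" for K unfolding overlap_Icc[abs_def] by measurable
  qed (use m in \<open>auto simp: overlap_Icc max_def min_def\<close>)
  moreover have "beta_integral Bp Bn (overlap {m..m + K} {0..m}) = beta_integral Bp Bn (overlap {0..m} {m..m + K})" for K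
    by (rule beta_integral_overlap_commute) auto
  ultimately show ?thesis
    using tendsto_unique[OF trivial_limit_at_top_linorder] by force
qed

lemma has_integral_Fb:
  assumes "0 \<le> y"
  shows "(Fb Bp Bn has_integral beta_integral Bp Bn (\<lambda>x. max 0 (min y x))) {0..y}"
  using has_integral_diff[OF has_integral_measure_atLeast[OF Bp.finite_measure_axioms sets_Bp assms]
      has_integral_measure_atLeast[OF Bn.finite_measure_axioms sets_Bn assms]]
  by (simp add: Fb_def[abs_def] beta_of_def beta_integral_def)

lemma Gb_eq: "0 \<le> y \<Longrightarrow> Gb Bp Bn y = - beta_integral Bp Bn (\<lambda>x. max 0 (min y x))"
  using has_integral_Fb by (simp add: Gb_def integral_unique)

lemma var_Lam_eq_Gb_beta_of:
  assumes y: "0 \<le> y"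
  shows "var_cnt M X (Lam y t) = y * (1 + beta_of Bp Bn UNIV) + 2 * Gb Bp Bn y"
proof -
  define c where "c x = max 0 (min y x)" for x
  have ic: "integrable Bp c" "integrable Bn c" "integrable Bp (\<lambda>x. c (- x))" "integrable Bn (\<lambda>x. c (- x))"
    and iy: "integrable Bp (\<lambda>_. y)" "integrable Bn (\<lambda>_. y)"
    using y by (auto intro!: integrable_bounded_beta[where K = y] simp: c_def[abs_def])
  have "beta_integral Bp Bn (\<lambda>x. max 0 (y - \<bar>x\<bar>)) = beta_integral Bp Bn (\<lambda>x. y - c x - c (- x))"
    using y by (intro arg_cong[where f = "beta_integral Bp Bn"]) (auto simp: c_def max_def min_def)
  also have "\<dots> = y * beta_of Bp Bn UNIV - beta_integral Bp Bn c - beta_integral Bp Bn (\<lambda>x. c (- x))"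
    using ic iy by (simp add: beta_integral_diff beta_integral_const)
  also have "\<dots> = y * beta_of Bp Bn UNIV + 2 * Gb Bp Bn y"
    using beta_integral_ramp_reflect[OF y] Gb_eq[OF y] by (simp add: c_def[abs_def])
  finally show ?thesis using var_Lam[OF y] by (simp add: algebra_simps)
qed

lemma cov_Lam_eq_var:
  assumes n: "0 \<le> n"
  shows "2 * cov_cnt M X (Lam n 0) (Lam n s)
    = var_cnt M X (Lam \<bar>s + n\<bar> 0) + var_cnt M X (Lam \<bar>s - n\<bar> 0) - 2 * var_cnt M X (Lam \<bar>s\<bar> 0)"
proof -
  define T where "T u = max 0 (n - \<bar>u\<bar>)" for u
  define P where "P m x = max 0 (m - \<bar>x\<bar>)" for m x :: real
  have iT: "integrable Bp (\<lambda>x. T (s + x))" "integrable Bn (\<lambda>x. T (s + x))"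
    "integrable Bp (\<lambda>x. T (s - x))" "integrable Bn (\<lambda>x. T (s - x))"
    using n by (auto intro!: integrable_bounded_beta[where K = n] simp: T_def)
  have iP: "integrable Bp (P m)" "integrable Bn (P m)" for m
    by (auto intro!: integrable_bounded_beta[where K = "\<bar>m\<bar>"] simp: P_def[abs_def])
  have "{0..n} \<inter> {s..s + n} = {max 0 s..min n (s + n)}" by auto
  then have "measure lborel ({0..n} \<inter> {s..s + n}) = T s" by (simp add: T_def max_def min_def abs_if)
  moreover have ov: "overlap {0..n} {s..s + n} = (\<lambda>x. T (s + x))" "overlap {s..s + n} {0..n} = (\<lambda>x. T (s - x))"
    by (auto simp: overlap_Icc T_def max_def min_def abs_if)
  ultimately have cov: "cov_cnt M X (Lam n 0) (Lam n s) = T s + beta_integral Bp Bn (\<lambda>x. T (s + x))"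
    using cov_cnt_eq[of "{0..n}" "{s..s + n}"] by (simp add: Lam_def)
  have "beta_integral Bp Bn (\<lambda>x. T (s + x)) = beta_integral Bp Bn (\<lambda>x. T (s - x))"
    using beta_integral_overlap_commute[of "{0..n}" "{s..s + n}"] by (simp add: ov)
  then have "2 * beta_integral Bp Bn (\<lambda>x. T (s + x)) = beta_integral Bp Bn (\<lambda>x. T (s + x) + T (s - x))"
    using iT by (simp add: beta_integral_add)
  also have "\<dots> = beta_integral Bp Bn (\<lambda>x. P \<bar>s + n\<bar> x + P \<bar>s - n\<bar> x - 2 * P \<bar>s\<bar> x)"
    using n by (intro arg_cong[where f = "beta_integral Bp Bn"]) (auto simp: T_def P_def max_def abs_if)
  also have "\<dots> = beta_integral Bp Bn (P \<bar>s + n\<bar>) + beta_integral Bp Bn (P \<bar>s - n\<bar>) - 2 * beta_integral Bp Bn (P \<bar>s\<bar>)"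
    using iP by (simp add: beta_integral_add beta_integral_diff beta_integral_cmult)
  finally have "2 * beta_integral Bp Bn (\<lambda>x. T (s + x))
    = beta_integral Bp Bn (P \<bar>s + n\<bar>) + beta_integral Bp Bn (P \<bar>s - n\<bar>) - 2 * beta_integral Bp Bn (P \<bar>s\<bar>)" .
  moreover have "2 * T s = \<bar>s + n\<bar> + \<bar>s - n\<bar> - 2 * \<bar>s\<bar>"
    using n by (simp add: T_def max_def abs_if)
  ultimately show ?thesis using cov
    by (simp add: var_Lam P_def[abs_def] algebra_simps)
qed

lemma Gb_diff:
  assumes "0 \<le> x" "x \<le> y"
  shows "Gb Bp Bn y - Gb Bp Bn x = - integral {x..y} (Fb Bp Bn)"
proof -
  have "Fb Bp Bn integrable_on {0..y}" using has_integral_Fb[of y] assms by (auto intro: has_integral_integrable)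
  from Henstock_Kurzweil_Integration.integral_combine[OF assms this] show ?thesis by (simp add: Gb_def)
qed

lemma Gb_mono_on:
  assumes "\<And>x. x0 \<le> x \<Longrightarrow> Fb Bp Bn x \<le> 0"
  shows "mono_on {max x0 0..} (Gb Bp Bn)"
proof (rule mono_onI)
  fix x y assume "x \<in> {max x0 0..}" "y \<in> {max x0 0..}" "x \<le> y"
  moreover from this have "Fb Bp Bn integrable_on {x..y}"
    using has_integral_Fb[of y] by (auto intro: integrable_subinterval_real has_integral_integrable)
  ultimately have "integral {x..y} (Fb Bp Bn) \<le> integral {x..y} (\<lambda>_. 0)"
    using assms by (intro integral_le) auto
  with Gb_diff[of x y] \<open>x \<in> _\<close> \<open>x \<le> y\<close> show "Gb Bp Bn x \<le> Gb Bp Bn y" by simp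
qed

lemma Gb_antimono_on:
  assumes "\<And>x. x0 \<le> x \<Longrightarrow> 0 \<le> Fb Bp Bn x"
  shows "antimono_on {max x0 0..} (Gb Bp Bn)"
proof (rule monotone_onI)
  fix x y assume "x \<in> {max x0 0..}" "y \<in> {max x0 0..}" "x \<le> y"
  moreover from this have "Fb Bp Bn integrable_on {x..y}"
    using has_integral_Fb[of y] by (auto intro: integrable_subinterval_real has_integral_integrable)
  ultimately have "integral {x..y} (\<lambda>_. 0) \<le> integral {x..y} (Fb Bp Bn)"
    using assms by (intro integral_le) auto
  with Gb_diff[of x y] \<open>x \<in> _\<close> \<open>x \<le> y\<close> show "Gb Bp Bn y \<le> Gb Bp Bn x" by simp
qed

end

locale hyperuniform_tpc_point_process = tpc_point_process +
  assumes hyperuniform: "hyperuniform M X"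
begin

lemma beta_of_UNIV: "beta_of Bp Bn UNIV = -1"
  using tendsto_unique[OF trivial_limit_at_top_linorder tendsto_var_Lam_div
      hyperuniform[unfolded hyperuniform_def]]
  by simp

lemma var_Lam_eq_Gb: "0 \<le> y \<Longrightarrow> var_cnt M X (Lam y t) = 2 * Gb Bp Bn y"
  by (simp add: var_Lam_eq_Gb_beta_of beta_of_UNIV)

lemma cov_ratio_eq:
  assumes "0 \<le> n"
  shows "cov_ratio M X z n = cov_ratio_of (Gb Bp Bn) z n"
proof -
  have "n * z + n = n * (z + 1)" "n * z - n = n * (z - 1)" by (simp_all add: algebra_simps)
  then have "\<bar>n * z + n\<bar> = \<bar>z + 1\<bar> * n" "\<bar>n * z - n\<bar> = \<bar>z - 1\<bar> * n" "\<bar>n * z\<bar> = \<bar>z\<bar> * n"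
    using assms by (simp_all only: abs_mult abs_of_nonneg mult.commute)
  then show ?thesis
    using cov_Lam_eq_var[OF assms, of "n * z"] assms
    by (simp add: cov_ratio_def cov_ratio_of_def var_Lam_eq_Gb)
qed

lemma tendsto_cov_ratio_iff:
  "(cov_ratio M X z \<longlongrightarrow> l) at_top \<longleftrightarrow> (cov_ratio_of (Gb Bp Bn) z \<longlongrightarrow> l) at_top"
  by (rule filterlim_cong) (auto intro: eventually_mono[OF eventually_ge_at_top[of 0]] simp: cov_ratio_eq)

lemma Gb_sublinear: "((\<lambda>y. Gb Bp Bn y / y) \<longlongrightarrow> 0) at_top"
proof -
  have "((\<lambda>y. var_cnt M X (Lam y 0) / y / 2) \<longlongrightarrow> 0 / 2) at_top"
    using hyperuniform unfolding hyperuniform_def by (intro tendsto_divide) auto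
  then have "((\<lambda>y. var_cnt M X (Lam y 0) / y / 2) \<longlongrightarrow> 0) at_top" by simp
  then show ?thesis
    by (rule Lim_transform_eventually) (auto intro: eventually_mono[OF eventually_ge_at_top[of 0]] simp: var_Lam_eq_Gb)
qed

text \<open>The count of \<open>[0, k + 1/2]\<close> is an integer, while its mean \<open>k + 1/2\<close> is not.\<close>
lemma Gb_half_integer_ge: "1 / 8 \<le> Gb Bp Bn (real k + 1 / 2)"
proof -
  have "(1 / 2)\<^sup>2 \<le> var_cnt M X {0..real k + 1 / 2}"
  proof (rule var_cnt_ge)
    show "1 / 2 \<le> \<bar>real j - measure lborel {0..real k + 1 / 2}\<bar>" for j :: nat
      by (cases "j \<le> k") auto
  qed auto
  then show ?thesis using var_Lam_eq_Gb[of "real k + 1 / 2" 0] by (simp add: Lam_def power2_eq_square)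
qed


lemma tendsto_cov_ratio_if_regularly_varying:
  assumes "0 \<le> a" "regularly_varying (Gb Bp Bn) a"
  shows "(cov_ratio M X z \<longlongrightarrow> cov_target a z) at_top"
  using tendsto_cov_ratio_of_if_regularly_varying[of "Gb Bp Bn", OF Gb_0 assms(2,1)]
  by (simp add: tendsto_cov_ratio_iff)

lemma Gb_eventually_monotone_ge:
  assumes "(\<forall>\<^sub>F x in at_top. Fb Bp Bn x \<le> 0) \<or> (\<forall>\<^sub>F x in at_top. Fb Bp Bn x \<ge> 0)"
  obtains x0 where "mono_on {x0..} (Gb Bp Bn) \<or> antimono_on {x0..} (Gb Bp Bn)"
    and "\<forall>\<^sub>F x in at_top. 1 / 8 \<le> Gb Bp Bn x"
proof -
  obtain x0 where mono: "mono_on {x0..} (Gb Bp Bn) \<or> antimono_on {x0..} (Gb Bp Bn)"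
    using assms Gb_mono_on Gb_antimono_on unfolding eventually_at_top_linorder by blast
  have "\<exists>y\<ge>x. 1 / 8 \<le> Gb Bp Bn y" for x
    using Gb_half_integer_ge[of "nat \<lceil>x\<rceil>"] by (intro exI[of _ "real (nat \<lceil>x\<rceil>) + 1 / 2"]) linarith
  then have "\<forall>\<^sub>F x in at_top. 1 / 8 \<le> Gb Bp Bn x" by (rule eventually_ge_if_monotone[OF mono])
  with mono show thesis by (rule that)
qed

lemma regularly_varying_Gb_iff_tendsto_cov_ratio:
  assumes "(\<forall>\<^sub>F x in at_top. Fb Bp Bn x \<le> 0) \<or> (\<forall>\<^sub>F x in at_top. Fb Bp Bn x \<ge> 0)" and "a \<in> {0..1}"
  shows "regularly_varying (Gb Bp Bn) a \<longleftrightarrow> (\<forall>z. (cov_ratio M X z \<longlongrightarrow> cov_target a z) at_top)"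
proof -
  obtain x0 where "mono_on {x0..} (Gb Bp Bn) \<or> antimono_on {x0..} (Gb Bp Bn)"
    and "\<forall>\<^sub>F x in at_top. 1 / 8 \<le> Gb Bp Bn x"
    using Gb_eventually_monotone_ge[OF assms(1)] .
  from regularly_varying_iff_tendsto_cov_ratio_of[OF Gb_0 Gb_sublinear this _ assms(2)] show ?thesis
    by (simp add: tendsto_cov_ratio_iff)
qed

lemma tendsto_cov_ratio_1_2_iff:
  assumes "(\<forall>\<^sub>F x in at_top. Fb Bp Bn x \<le> 0) \<or> (\<forall>\<^sub>F x in at_top. Fb Bp Bn x \<ge> 0)"
  shows "(\<exists>c1 c2. (cov_ratio M X 1 \<longlongrightarrow> c1) at_top \<and> (cov_ratio M X 2 \<longlongrightarrow> c2) at_top)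
    \<longleftrightarrow> (\<exists>a\<in>{0..1}. regularly_varying (Gb Bp Bn) a)"
proof -
  obtain x0 where "mono_on {x0..} (Gb Bp Bn) \<or> antimono_on {x0..} (Gb Bp Bn)"
    and "\<forall>\<^sub>F x in at_top. 1 / 8 \<le> Gb Bp Bn x"
    using Gb_eventually_monotone_ge[OF assms] .
  from tendsto_cov_ratio_of_1_2_iff[OF Gb_0 Gb_sublinear this] show ?thesis
    by (simp add: tendsto_cov_ratio_iff)
qed

end

theorem theorem2:
  fixes M :: "'w measure" and X :: "'w \<Rightarrow> real set"
    and A Bp Bn :: "real measure"
  assumes pp: "point_process M X"
    and stat: "stationary_pp M X"
    and unit: "unit_intensity M X"
    and red: "reduced_second_moment M X A"
    and beta: "finite_tpc_decomp A Bp Bn"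
    and hu: "hyperuniform M X"
  shows "(\<forall>y>0. Gb Bp Bn y = var_cnt M X (Lam y 0) / 2)
    \<and> (\<forall>a\<in>{0..1}. regularly_varying (Gb Bp Bn) a \<longrightarrow>
          (\<forall>z. (cov_ratio M X z \<longlongrightarrow> cov_target a z) at_top)
          \<and> (cov_ratio M X 1 \<longlongrightarrow> 2 powr (a - 1) - 1) at_top)
    \<and> (((\<forall>\<^sub>F x in at_top. Fb Bp Bn x \<le> 0) \<or> (\<forall>\<^sub>F x in at_top. Fb Bp Bn x \<ge> 0)) \<longrightarrow>
          (\<forall>a\<in>{0..1}. regularly_varying (Gb Bp Bn) a \<longleftrightarrow>
             (\<forall>z. (cov_ratio M X z \<longlongrightarrow> cov_target a z) at_top))
          \<and> ((\<exists>c1 c2. (cov_ratio M X 1 \<longlongrightarrow> c1) at_top \<and> (cov_ratio M X 2 \<longlongrightarrow> c2) at_top)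
               \<longleftrightarrow> (\<exists>a\<in>{0..1}. regularly_varying (Gb Bp Bn) a)))"
proof -
  interpret hyperuniform_tpc_point_process M X A Bp Bn
    using pp unit red beta hu by unfold_locales
  have "(cov_ratio M X 1 \<longlongrightarrow> 2 powr (a - 1) - 1) at_top"
    if "a \<in> {0..1}" "regularly_varying (Gb Bp Bn) a" for a
    using tendsto_cov_ratio_if_regularly_varying[of a 1] cov_target_1[of a] that by simp
  then show ?thesis
    using var_Lam_eq_Gb tendsto_cov_ratio_if_regularly_varying
      regularly_varying_Gb_iff_tendsto_cov_ratio tendsto_cov_ratio_1_2_iff
    by auto
qed

end
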